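(* Let $k\geq 2$, $t\geq 0$, and $n\geq k^2+tk(k-1)$ be integers such that $k^2+tk(k-1)$ divides $n$. If there exists a $(k^2+tk(k-1),k,1)$-RBIBD, then there is a coloring of the edges of the complete graph $K_n$ with $(t+1)k+1$ colors such that every monochromatic component has at most $\frac{n}{(t+1)k-t}$ vertices. In particular (the case $t=0$), if there exists an affine plane of order $k$, then there exists a coloring of the edges of $K_n$ with $k+1$ colors such that every monochromatic component has at most $\frac{n}{k}$ vertices.
   Context: A $(v,k,1)$-resolvable balanced incomplete block design ($(v,k,1)$-RBIBD) is a $k$-uniform hypergraph on $v$ vertices in which each pair of distinct vertices lies in exactly one edge, and whose edge set can be partitioned into perfect matchings. An affine plane of order $k$ is a $k$-uniform hypergraph on $k^2$ vertices with $k(k+1)$ edges such that each pair of distinct vertices lies in exactly one edge (equivalently a $(k^2,k,1)$-RBIBD). A monochromatic component is a maximal connected subgraph all of whose edges have the same color. *)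

theory Defs
  imports Complex_Main "HOL-Library.Disjoint_Sets"
begin

definition pair_design :: "'a set \<Rightarrow> 'a set set \<Rightarrow> nat \<Rightarrow> bool" where
  "pair_design V E k \<longleftrightarrow> finite V \<and> (\<forall>e\<in>E. e \<subseteq> V \<and> card e = k) \<and>
     (\<forall>x\<in>V. \<forall>y\<in>V. x \<noteq> y \<longrightarrow> (\<exists>!e. e \<in> E \<and> x \<in> e \<and> y \<in> e))"

definition perfect_matching :: "'a set \<Rightarrow> 'a set set \<Rightarrow> bool" where
  "perfect_matching V M \<longleftrightarrow>
     (\<forall>e1\<in>M. \<forall>e2\<in>M. e1 \<noteq> e2 \<longrightarrow> e1 \<inter> e2 = {}) \<and> \<Union>M = V"

definition is_rbibd :: "'a set \<Rightarrow> 'a set set \<Rightarrow> nat \<Rightarrow> nat \<Rightarrow> bool" where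
  "is_rbibd V E v k \<longleftrightarrow> pair_design V E k \<and> card V = v \<and>
     (\<exists>P. partition_on E P \<and> (\<forall>M\<in>P. perfect_matching V M))"

definition rbibd_exists :: "nat \<Rightarrow> nat \<Rightarrow> bool" where
  "rbibd_exists v k \<longleftrightarrow> (\<exists>(V::nat set) E. is_rbibd V E v k)"

definition affine_plane_exists :: "nat \<Rightarrow> bool" where
  "affine_plane_exists k \<longleftrightarrow> (\<exists>(V::nat set) E. pair_design V E k \<and> card V = k^2 \<and>
      finite E \<and> card E = k * (k + 1))"

definition edge_coloring :: "nat \<Rightarrow> nat \<Rightarrow> (nat \<Rightarrow> nat \<Rightarrow> nat) \<Rightarrow> bool" where
  "edge_coloring n r c \<longleftrightarrow>
     (\<forall>u<n. \<forall>v<n. u \<noteq> v \<longrightarrow> c u v = c v u \<and> c u v < r)"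

definition col_edge :: "nat \<Rightarrow> (nat \<Rightarrow> nat \<Rightarrow> nat) \<Rightarrow> nat \<Rightarrow> nat \<Rightarrow> nat \<Rightarrow> bool" where
  "col_edge n c i u v \<longleftrightarrow> u < n \<and> v < n \<and> u \<noteq> v \<and> c u v = i"

definition mono_component :: "nat \<Rightarrow> (nat \<Rightarrow> nat \<Rightarrow> nat) \<Rightarrow> nat \<Rightarrow> nat \<Rightarrow> nat set" where
  "mono_component n c i x = {y. (col_edge n c i)\<^sup>*\<^sup>* x y}"

end

theory Submission
  imports Defs
begin

text \<open>
  The parallel classes of a resolvable design on \<open>v\<close> points are partitions of the points
  into blocks of size \<open>k\<close> such that every pair of points lies in a block of some class;
  counting blocks through a point shows there are \<open>(v - 1) / (k - 1)\<close> of them, which is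
  \<open>(t + 1) k + 1\<close> for \<open>v = k\<^sup>2 + t k (k - 1)\<close>. Blow every point up into \<open>m = n / v\<close>
  vertices of \<open>K\<^sub>n\<close> and colour an edge with a class in which the images of its endpoints
  share a block. A monochromatic component of colour \<open>i\<close> then stays inside the blow-up of
  a single block of class \<open>i\<close>, so it has at most \<open>k m = n / ((t + 1) k - t)\<close> vertices.
  An affine plane of order \<open>k\<close> is resolvable: by counting the \<open>k + 1\<close> lines through a point
  one gets Playfair's axiom, so parallelism is an equivalence relation on the lines whose
  classes are perfect matchings.
\<close>

lemma mono_component_subset_closed:
  assumes "x \<in> S" and "\<And>u v. col_edge n c i u v \<Longrightarrow> u \<in> S \<Longrightarrow> v \<in> S"
  shows "mono_component n c i x \<subseteq> S"
proof
  fix y assume "y \<in> mono_component n c i x"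
  then have "(col_edge n c i)\<^sup>*\<^sup>* x y" by (simp add: mono_component_def)
  then show "y \<in> S" by induction (use assms in blast)+
qed

lemma mono_component_subset_part:
  assumes "disjoint P" and X: "X \<in> P" "g x \<in> X" and "x < n"
    and part: "\<And>a b. col_edge n c i a b \<Longrightarrow> \<exists>Y\<in>P. g a \<in> Y \<and> g b \<in> Y"
  shows "mono_component n c i x \<subseteq> {a\<in>{0..<n}. g a \<in> X}"
proof (rule mono_component_subset_closed)
  show "x \<in> {a\<in>{0..<n}. g a \<in> X}"
    using \<open>x < n\<close> X by simp
  fix a b assume edge: "col_edge n c i a b" and a: "a \<in> {a\<in>{0..<n}. g a \<in> X}"
  obtain Y where "Y \<in> P" "g a \<in> Y" "g b \<in> Y"
    using part[OF edge] by blast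
  then have "Y = X"
    using a X disjointD[OF \<open>disjoint P\<close>] by blast
  then show "b \<in> {a\<in>{0..<n}. g a \<in> X}"
    using edge \<open>g b \<in> Y\<close> by (simp add: col_edge_def)
qed

lemma edge_coloring_least_index:
  assumes "\<And>a b. a < n \<Longrightarrow> b < n \<Longrightarrow> \<exists>i<r. R i a b"
    and "\<And>i a b. R i a b \<longleftrightarrow> R i b a"
  shows "\<exists>c. edge_coloring n r c \<and> (\<forall>a<n. \<forall>b<n. R (c a b) a b)"
proof -
  define c where "c a b = (LEAST i. i < r \<and> R i a b)" for a b
  have c: "c a b < r \<and> R (c a b) a b" if "a < n" "b < n" for a b
    using assms(1)[OF that] unfolding c_def by (metis (mono_tags, lifting) LeastI)
  have "c a b = c b a" for a b
    unfolding c_def by (metis assms(2))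
  with c show ?thesis
    unfolding edge_coloring_def by blast
qed

lemma card_bij_product_snd_preimage:
  assumes h: "bij_betw h A (B \<times> V)" and "X \<subseteq> V"
  shows "card {a\<in>A. snd (h a) \<in> X} = card B * card X"
proof -
  have "h ` {a\<in>A. snd (h a) \<in> X} = B \<times> X"
  proof (intro equalityI subsetI)
    fix p assume "p \<in> h ` {a\<in>A. snd (h a) \<in> X}"
    then obtain a where "a \<in> A" "snd (h a) \<in> X" "p = h a"
      by blast
    then show "p \<in> B \<times> X"
      using bij_betwE[OF h] by (simp add: mem_Times_iff)
  next
    fix p assume p: "p \<in> B \<times> X"
    then have "p \<in> h ` A"
      using bij_betw_imp_surj_on[OF h] \<open>X \<subseteq> V\<close> by (simp add: mem_Times_iff subset_iff)
    then obtain a where "a \<in> A" "p = h a"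
      by blast
    with p show "p \<in> h ` {a\<in>A. snd (h a) \<in> X}"
      by (simp add: mem_Times_iff)
  qed
  then have "bij_betw h {a\<in>A. snd (h a) \<in> X} (B \<times> X)"
    by (rule bij_betw_subset[OF h, rotated]) simp
  then show ?thesis
    by (simp add: bij_betw_same_card card_cartesian_product)
qed

lemma ex_blowup_map:
  assumes "finite V"
  shows "\<exists>g. (\<forall>a < m * card V. g a \<in> V) \<and>
    (\<forall>X \<subseteq> V. card {a\<in>{0..<m * card V}. g a \<in> X} = m * card X)"
proof -
  have "card ({0..<m} \<times> V) = m * card V"
    by (simp add: card_cartesian_product)
  with ex_bij_betw_nat_finite[of "{0..<m} \<times> V"] \<open>finite V\<close>
  obtain h where h: "bij_betw h {0..<m * card V} ({0..<m} \<times> V)"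
    by auto
  have "snd (h a) \<in> V" if "a < m * card V" for a
  proof -
    have "h a \<in> {0..<m} \<times> V"
      using bij_betwE[OF h] that by simp
    then show ?thesis
      by (simp add: mem_Times_iff)
  qed
  moreover have "card {a\<in>{0..<m * card V}. snd (h a) \<in> X} = m * card X" if "X \<subseteq> V" for X
    using card_bij_product_snd_preimage[OF h that] by simp
  ultimately show ?thesis
    by (intro exI[of _ "\<lambda>a. snd (h a)"]) blast
qed

lemma blowup_coloring:
  fixes V :: "'a set" and F :: "nat \<Rightarrow> 'a set set"
  assumes "finite V"
    and partition: "\<And>i. i < r \<Longrightarrow> partition_on V (F i)"
    and small: "\<And>i X. i < r \<Longrightarrow> X \<in> F i \<Longrightarrow> card X \<le> k"
    and cover: "\<And>p q. p \<in> V \<Longrightarrow> q \<in> V \<Longrightarrow> \<exists>i<r. \<exists>X\<in>F i. p \<in> X \<and> q \<in> X"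
  shows "\<exists>c. edge_coloring (m * card V) r c \<and>
    (\<forall>i x. x < m * card V \<longrightarrow> card (mono_component (m * card V) c i x) \<le> k * m)"
proof -
  define n where "n = m * card V"
  obtain g where gV: "\<And>a. a < n \<Longrightarrow> g a \<in> V"
    and g_card: "\<And>X. X \<subseteq> V \<Longrightarrow> card {a\<in>{0..<n}. g a \<in> X} = m * card X"
    using ex_blowup_map[OF \<open>finite V\<close>, of m] unfolding n_def by blast
  have cover_g: "\<exists>i<r. \<exists>X\<in>F i. g a \<in> X \<and> g b \<in> X" if "a < n" "b < n" for a b
    using cover[OF gV gV] that .
  have sym_g: "(\<exists>X\<in>F i. g a \<in> X \<and> g b \<in> X) \<longleftrightarrow> (\<exists>X\<in>F i. g b \<in> X \<and> g a \<in> X)" for i a b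
    by blast
  obtain c where c: "edge_coloring n r c"
    and c_part: "\<forall>a<n. \<forall>b<n. \<exists>X\<in>F (c a b). g a \<in> X \<and> g b \<in> X"
    using edge_coloring_least_index[of n r "\<lambda>i a b. \<exists>X\<in>F i. g a \<in> X \<and> g b \<in> X",
        OF cover_g sym_g]
    by blast
  have "card (mono_component n c i x) \<le> k * m" if x: "x < n" for i x
  proof -
    \<comment> \<open>Colours \<open>i \<ge> r\<close> have no edges, so a part of any partition will do for them.\<close>
    define j where "j = (if i < r then i else 0)"
    have "j < r"
      using cover_g[OF x x] by (auto simp: j_def)
    obtain X where X: "X \<in> F j" "g x \<in> X"
      using partition_onD1[OF partition[OF \<open>j < r\<close>]] gV[OF x] by blast
    have "mono_component n c i x \<subseteq> {a\<in>{0..<n}. g a \<in> X}"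
    proof (rule mono_component_subset_part[where g = g,
          OF partition_onD2[OF partition[OF \<open>j < r\<close>]] X x])
      fix a b assume "col_edge n c i a b"
      then have "i = c a b" "a < n" "b < n" "a \<noteq> b"
        by (auto simp: col_edge_def)
      moreover have "i < r"
        using c calculation by (simp add: edge_coloring_def)
      ultimately show "\<exists>Y\<in>F j. g a \<in> Y \<and> g b \<in> Y"
        using c_part by (simp add: j_def)
    qed
    then have "card (mono_component n c i x) \<le> card {a\<in>{0..<n}. g a \<in> X}"
      by (rule card_mono[rotated]) simp
    also have "\<dots> = m * card X"
      using partition_onD1[OF partition[OF \<open>j < r\<close>]] X(1) by (intro g_card) blast
    also have "\<dots> \<le> k * m"
      using small[OF \<open>j < r\<close> X(1)] by simp
    finally show ?thesis .
  qed
  with c show ?thesis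
    unfolding n_def by blast
qed

lemma pair_design_finite: "pair_design V E k \<Longrightarrow> finite V"
  by (simp add: pair_design_def)

lemma pair_design_block_subset: "pair_design V E k \<Longrightarrow> e \<in> E \<Longrightarrow> e \<subseteq> V"
  by (simp add: pair_design_def)

lemma pair_design_card_block: "pair_design V E k \<Longrightarrow> e \<in> E \<Longrightarrow> card e = k"
  by (simp add: pair_design_def)

lemma pair_design_finite_blocks:
  assumes "pair_design V E k"
  shows "finite E"
proof (rule finite_subset)
  show "E \<subseteq> Pow V"
    using pair_design_block_subset[OF assms] by blast
  show "finite (Pow V)"
    using pair_design_finite[OF assms] by simp
qed

lemma pair_design_block_unique:
  assumes "pair_design V E k" "e \<in> E" "e' \<in> E" "p \<in> e" "p \<in> e'" "q \<in> e" "q \<in> e'" "p \<noteq> q"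
  shows "e = e'"
  using assms unfolding pair_design_def by blast

lemma pair_design_ex_block:
  assumes "pair_design V E k" "p \<in> V" "q \<in> V" "p \<noteq> q"
  shows "\<exists>e\<in>E. p \<in> e \<and> q \<in> e"
  using assms unfolding pair_design_def by blast

lemma pair_design_ex_common_block:
  assumes pd: "pair_design V E k" and "2 \<le> card V" "p \<in> V" "q \<in> V"
  shows "\<exists>e\<in>E. p \<in> e \<and> q \<in> e"
proof (cases "p = q")
  case True
  have "\<not> card V \<le> Suc 0"
    using \<open>2 \<le> card V\<close> by simp
  then obtain q' where "q' \<in> V" "q' \<noteq> p"
    using card_le_Suc0_iff_eq[OF pair_design_finite[OF pd]] \<open>p \<in> V\<close> by blast
  then show ?thesis
    using pair_design_ex_block[OF pd \<open>p \<in> V\<close>] True by blast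
qed (use pair_design_ex_block[OF pd] assms in blast)

lemma pair_design_replication:
  assumes pd: "pair_design V E k" and p: "p \<in> V"
  shows "card {e\<in>E. p \<in> e} * (k - 1) = card V - 1"
proof -
  let ?B = "{e\<in>E. p \<in> e}"
  have "V - {p} = (\<Union>e\<in>?B. e - {p})"
    using pair_design_ex_block[OF pd p] pair_design_block_subset[OF pd] by blast
  then have "card (V - {p}) = card (\<Union>e\<in>?B. e - {p})"
    by simp
  also have "\<dots> = (\<Sum>e\<in>?B. card (e - {p}))"
  proof (rule card_UN_disjoint)
    show "finite ?B"
      using pair_design_finite_blocks[OF pd] by simp
    show "\<forall>e\<in>?B. finite (e - {p})"
      using pair_design_finite[OF pd] pair_design_block_subset[OF pd] by (blast intro: finite_subset)
    show "\<forall>e\<in>?B. \<forall>e'\<in>?B. e \<noteq> e' \<longrightarrow> (e - {p}) \<inter> (e' - {p}) = {}"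
      using pair_design_block_unique[OF pd] by blast
  qed
  also have "\<dots> = (\<Sum>e\<in>?B. k - 1)"
    using pair_design_card_block[OF pd] by (intro sum.cong) auto
  finally show ?thesis
    using p pair_design_finite[OF pd] by (simp add: mult.commute)
qed

lemma perfect_matching_partition_on:
  "perfect_matching V M \<Longrightarrow> {} \<notin> M \<Longrightarrow> partition_on V M"
  unfolding perfect_matching_def partition_on_def disjoint_def by blast

lemma perfect_matching_card_blocks_through:
  assumes "perfect_matching V M" "p \<in> V"
  shows "card {e\<in>M. p \<in> e} = 1"
proof -
  obtain e where e: "e \<in> M" "p \<in> e"
    using assms unfolding perfect_matching_def by blast
  then have "{e\<in>M. p \<in> e} = {e}"
    using assms(1) unfolding perfect_matching_def by blast
  then show ?thesis
    by simp
qed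

lemma resolution_card_eq_replication:
  assumes "finite E" and P: "partition_on E P"
    and pm: "\<And>M. M \<in> P \<Longrightarrow> perfect_matching V M" and "p \<in> V"
  shows "card P = card {e\<in>E. p \<in> e}"
proof -
  have "finite P"
    using finite_elements[OF \<open>finite E\<close> P] .
  have "{e\<in>E. p \<in> e} = (\<Union>M\<in>P. {e\<in>M. p \<in> e})"
    using partition_onD1[OF P] by blast
  then have "card {e\<in>E. p \<in> e} = card (\<Union>M\<in>P. {e\<in>M. p \<in> e})"
    by simp
  also have "\<dots> = (\<Sum>M\<in>P. card {e\<in>M. p \<in> e})"
  proof (rule card_UN_disjoint[OF \<open>finite P\<close>])
    show "\<forall>M\<in>P. finite {e\<in>M. p \<in> e}"
      using partition_onD1[OF P] \<open>finite E\<close> by (blast intro: finite_subset)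
    show "\<forall>M\<in>P. \<forall>M'\<in>P. M \<noteq> M' \<longrightarrow> {e\<in>M. p \<in> e} \<inter> {e\<in>M'. p \<in> e} = {}"
      using disjointD[OF partition_onD2[OF P]] by blast
  qed
  also have "\<dots> = card P"
    using perfect_matching_card_blocks_through[OF pm \<open>p \<in> V\<close>] by simp
  finally show ?thesis ..
qed

lemma rbibd_blowup_coloring:
  assumes rbibd: "is_rbibd V E v k" and "2 \<le> k" "2 \<le> v" and r: "r * (k - 1) = v - 1"
  shows "\<exists>c. edge_coloring (m * v) r c \<and>
    (\<forall>i x. x < m * v \<longrightarrow> card (mono_component (m * v) c i x) \<le> k * m)"
proof -
  obtain P where pd: "pair_design V E k" and V: "card V = v"
    and P: "partition_on E P" and pm: "\<And>M. M \<in> P \<Longrightarrow> perfect_matching V M"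
    using rbibd unfolding is_rbibd_def by blast
  have "{} \<notin> E"
    using pair_design_card_block[OF pd] \<open>2 \<le> k\<close> by force
  then have part: "partition_on V M" if "M \<in> P" for M
    using partition_onD1[OF P] that by (blast intro: perfect_matching_partition_on pm)
  obtain p where "p \<in> V"
    using \<open>2 \<le> v\<close> V by fastforce
  have "card P * (k - 1) = r * (k - 1)"
    using resolution_card_eq_replication[OF pair_design_finite_blocks[OF pd] P pm \<open>p \<in> V\<close>]
      pair_design_replication[OF pd \<open>p \<in> V\<close>] V r by simp
  then have "card P = r"
    using \<open>2 \<le> k\<close> by simp
  then obtain idx where idx: "bij_betw idx {0..<r} P"
    using ex_bij_betw_nat_finite[OF finite_elements[OF pair_design_finite_blocks[OF pd] P]] by blast
  have "\<exists>c. edge_coloring (m * card V) r c \<and>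
    (\<forall>i x. x < m * card V \<longrightarrow> card (mono_component (m * card V) c i x) \<le> k * m)"
  proof (rule blowup_coloring[OF pair_design_finite[OF pd]])
    show "partition_on V (idx i)" if "i < r" for i
      using part bij_betwE[OF idx] that by simp
    show "card X \<le> k" if "i < r" "X \<in> idx i" for i X
      using pair_design_card_block[OF pd] partition_onD1[OF P] bij_betwE[OF idx] that by force
    show "\<exists>i<r. \<exists>X\<in>idx i. p \<in> X \<and> q \<in> X" if pq: "p \<in> V" "q \<in> V" for p q
    proof -
      have "2 \<le> card V"
        using \<open>2 \<le> v\<close> V by simp
      then obtain e where "e \<in> E" "p \<in> e" "q \<in> e"
        using pair_design_ex_common_block[OF pd _ pq] by blast
      then obtain M where "M \<in> P" "e \<in> M"
        using partition_onD1[OF P] by blast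
      then obtain i where "i < r" "idx i = M"
        using bij_betw_imp_surj_on[OF idx] by force
      then show ?thesis
        using \<open>e \<in> M\<close> \<open>p \<in> e\<close> \<open>q \<in> e\<close> by blast
    qed
  qed
  then show ?thesis
    using V by simp
qed

lemma pair_design_card_blocks_meeting:
  assumes pd: "pair_design V E k" and L: "L \<in> E" and p: "p \<in> V" "p \<notin> L"
  shows "card {e\<in>E. p \<in> e \<and> e \<inter> L \<noteq> {}} = k"
proof -
  let ?M = "{e\<in>E. p \<in> e \<and> e \<inter> L \<noteq> {}}"
  have one_point: "card (e \<inter> L) = 1" if e: "e \<in> ?M" for e
  proof -
    obtain q where q: "q \<in> e" "q \<in> L"
      using e by blast
    have "e \<inter> L = {q}"
      using pair_design_block_unique[OF pd _ L] e q p(2) by blast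
    then show ?thesis
      by simp
  qed
  have "L = (\<Union>e\<in>?M. e \<inter> L)"
    using pair_design_ex_block[OF pd p(1)] pair_design_block_subset[OF pd L] p(2) by blast
  then have "card L = card (\<Union>e\<in>?M. e \<inter> L)"
    by simp
  also have "\<dots> = (\<Sum>e\<in>?M. card (e \<inter> L))"
  proof (rule card_UN_disjoint)
    show "finite ?M"
      using pair_design_finite_blocks[OF pd] by simp
    show "\<forall>e\<in>?M. finite (e \<inter> L)"
      using pair_design_finite[OF pd] pair_design_block_subset[OF pd L] by (blast intro: finite_subset)
    show "\<forall>e\<in>?M. \<forall>e'\<in>?M. e \<noteq> e' \<longrightarrow> (e \<inter> L) \<inter> (e' \<inter> L) = {}"
      using pair_design_block_unique[OF pd] p(2) by blast
  qed
  also have "\<dots> = card ?M"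
    using one_point by simp
  finally show ?thesis
    using pair_design_card_block[OF pd L] by simp
qed

lemma affine_plane_replication:
  assumes pd: "pair_design V E k" and "2 \<le> k" "card V = k^2" "p \<in> V"
  shows "card {e\<in>E. p \<in> e} = k + 1"
proof -
  have "k^2 - 1 = (k + 1) * (k - 1)"
    by (cases k) (simp_all add: power2_eq_square)
  then have "card {e\<in>E. p \<in> e} * (k - 1) = (k + 1) * (k - 1)"
    using pair_design_replication[OF pd \<open>p \<in> V\<close>] \<open>card V = k^2\<close> by (simp only:)
  moreover have "k - 1 \<noteq> 0"
    using \<open>2 \<le> k\<close> by simp
  ultimately show ?thesis
    by (metis mult_right_cancel)
qed

definition parallel :: "'a set set \<Rightarrow> ('a set \<times> 'a set) set" where
  "parallel E = {(e, L). e \<in> E \<and> L \<in> E \<and> (e = L \<or> e \<inter> L = {})}"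

lemma affine_plane_playfair:
  assumes pd: "pair_design V E k" and "2 \<le> k" "card V = k^2" and L: "L \<in> E" and p: "p \<in> V"
  shows "\<exists>!e. (e, L) \<in> parallel E \<and> p \<in> e"
proof (cases "p \<in> L")
  case True
  show ?thesis
  proof (rule ex1I[of _ L])
    show "(L, L) \<in> parallel E \<and> p \<in> L"
      using L True by (simp add: parallel_def)
    show "e = L" if "(e, L) \<in> parallel E \<and> p \<in> e" for e
      using that True by (auto simp: parallel_def)
  qed
next
  case False
  let ?B = "{e\<in>E. p \<in> e}" and ?M = "{e\<in>E. p \<in> e \<and> e \<inter> L \<noteq> {}}"
  have "finite ?M"
    using pair_design_finite_blocks[OF pd] by simp
  then have "card (?B - ?M) = card ?B - card ?M"
    by (rule card_Diff_subset) blast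
  also have "\<dots> = 1"
    using affine_plane_replication[OF pd \<open>2 \<le> k\<close> \<open>card V = k^2\<close> p]
      pair_design_card_blocks_meeting[OF pd L p False] by simp
  finally obtain e where e: "?B - ?M = {e}"
    by (rule card_1_singletonE)
  have "(e', L) \<in> parallel E \<and> p \<in> e' \<longleftrightarrow> e' = e" for e'
    using False L e by (auto simp: parallel_def)
  then show ?thesis
    by (intro ex1I[of _ e]) simp_all
qed

lemma affine_plane_equiv_parallel:
  assumes pd: "pair_design V E k" and "2 \<le> k" "card V = k^2"
  shows "equiv E (parallel E)"
proof (rule equivI)
  show "parallel E \<subseteq> E \<times> E" "refl_on E (parallel E)" "sym (parallel E)"
    by (auto simp: parallel_def refl_on_def sym_def)
  show "trans (parallel E)"
  proof (rule transI)
    fix e1 e2 e3 assume e12: "(e1, e2) \<in> parallel E" and e23: "(e2, e3) \<in> parallel E"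
    show "(e1, e3) \<in> parallel E"
    proof (cases "e1 \<inter> e3 = {}")
      case False
      then obtain p where "p \<in> e1" "p \<in> e3"
        by blast
      moreover have "e3 \<in> E" "p \<in> V"
        using e23 \<open>p \<in> e3\<close> pair_design_block_subset[OF pd] by (auto simp: parallel_def)
      moreover have "(e3, e2) \<in> parallel E" "e2 \<in> E"
        using e23 by (auto simp: parallel_def)
      ultimately have "e1 = e3"
        using e12 affine_plane_playfair[OF assms \<open>e2 \<in> E\<close> \<open>p \<in> V\<close>] by blast
      then show ?thesis
        using e12 by (auto simp: parallel_def)
    qed (use e12 e23 in \<open>auto simp: parallel_def\<close>)
  qed
qed

lemma affine_plane_parallel_class_perfect_matching:
  assumes pd: "pair_design V E k" and "2 \<le> k" "card V = k^2" and M: "M \<in> E // parallel E"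
  shows "perfect_matching V M"
proof -
  have equiv: "equiv E (parallel E)"
    using affine_plane_equiv_parallel[OF assms(1-3)] .
  obtain L where L: "L \<in> E" "M = parallel E `` {L}"
    using M by (auto elim: quotientE)
  have "e1 \<inter> e2 = {}" if "e1 \<in> M" "e2 \<in> M" "e1 \<noteq> e2" for e1 e2
  proof -
    have "(e1, e2) \<in> parallel E"
      using quotient_eq_iff[OF equiv M M that(1,2)] by simp
    then show ?thesis
      using \<open>e1 \<noteq> e2\<close> by (simp add: parallel_def)
  qed
  moreover have "\<Union>M = V"
  proof
    show "\<Union>M \<subseteq> V"
      using in_quotient_imp_subset[OF equiv M] pair_design_block_subset[OF pd] by blast
    show "V \<subseteq> \<Union>M"
    proof
      fix p assume "p \<in> V"
      then obtain e where "(e, L) \<in> parallel E" "p \<in> e"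
        using affine_plane_playfair[OF assms(1-3) L(1)] by blast
      then show "p \<in> \<Union>M"
        using L(2) by (auto simp: parallel_def)
    qed
  qed
  ultimately show ?thesis
    unfolding perfect_matching_def by blast
qed

lemma affine_plane_is_rbibd:
  assumes pd: "pair_design V E k" and "2 \<le> k" "card V = k^2"
  shows "is_rbibd V E (k^2) k"
  unfolding is_rbibd_def
  using pd \<open>card V = k^2\<close> partition_on_quotient[OF affine_plane_equiv_parallel[OF assms]]
    affine_plane_parallel_class_perfect_matching[OF assms] by blast

lemma affine_plane_exists_imp_rbibd_exists:
  "affine_plane_exists k \<Longrightarrow> 2 \<le> k \<Longrightarrow> rbibd_exists (k^2) k"
  unfolding affine_plane_exists_def rbibd_exists_def by (blast intro: affine_plane_is_rbibd)

theorem fact4p2: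
  fixes k t n :: nat
  assumes "k \<ge> 2"
    and "n \<ge> k^2 + t * k * (k - 1)"
    and "(k^2 + t * k * (k - 1)) dvd n"
  shows "(rbibd_exists (k^2 + t * k * (k - 1)) k \<longrightarrow>
           (\<exists>c. edge_coloring n ((t + 1) * k + 1) c \<and>
              (\<forall>i x. x < n \<longrightarrow>
                 real (card (mono_component n c i x)) \<le> real n / (real ((t + 1) * k) - real t))))
       \<and> (t = 0 \<longrightarrow> affine_plane_exists k \<longrightarrow>
           (\<exists>c. edge_coloring n (k + 1) c \<and>
              (\<forall>i x. x < n \<longrightarrow>
                 real (card (mono_component n c i x)) \<le> real n / real k)))"
proof -
  define v where "v = k^2 + t * k * (k - 1)"
  obtain m where n: "n = m * v"
    using assms(3) unfolding v_def by (metis dvdE mult.commute)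
  obtain j where k: "k = j + 2"
    using assms(1) by (metis add.commute le_Suc_ex)
  have "2 \<le> v"
    unfolding v_def k by (simp add: power2_eq_square)
  have r: "((t + 1) * k + 1) * (k - 1) = v - 1"
    unfolding v_def k by (simp add: power2_eq_square algebra_simps)
  define d where "d = real ((t + 1) * k) - real t"
  have "real n = real (k * m) * d"
    unfolding n v_def d_def k by (simp add: power2_eq_square algebra_simps)
  moreover have "t < (t + 1) * k"
    using mult_le_mono2[OF assms(1), of "t + 1"] by simp
  then have "0 < d"
    unfolding d_def by linarith
  ultimately have bound: "real (k * m) = real n / d"
    by simp
  have "rbibd_exists v k \<longrightarrow> (\<exists>c. edge_coloring n ((t + 1) * k + 1) c \<and>
      (\<forall>i x. x < n \<longrightarrow> real (card (mono_component n c i x)) \<le> real n / d))"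
    using rbibd_blowup_coloring[OF _ assms(1) \<open>2 \<le> v\<close> r, where m = m] bound
    unfolding rbibd_exists_def n by (metis of_nat_le_iff)
  then show ?thesis
    using affine_plane_exists_imp_rbibd_exists[OF _ assms(1)] unfolding v_def d_def by auto
qed

end
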